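(* Let $a$ be an odd positive integer and $b$ a positive integer. Then there are infinitely many practical numbers of the form $an+b$ with $n$ a nonnegative integer.
   Context: A positive integer $N$ is called a practical number if every integer in $[1,N]$ can be expressed as a sum of distinct positive divisors of $N$. *)

theory Defs
  imports Main
begin

definition practical :: "nat \<Rightarrow> bool" where
  "practical N \<longleftrightarrow> N > 0 \<and>
     (\<forall>m\<in>{1..N}. \<exists>S. S \<subseteq> {d. d dvd N} \<and> \<Sum>S = m)"

end

theory Submission
  imports Defs "HOL-Number_Theory.Residues"
begin

text \<open>If \<open>m\<close> is odd and \<open>m \<le> 2^(k+1)\<close>, then \<open>2^k * m\<close> is practical: divide \<open>x \<le> 2^k * m\<close> by \<open>m\<close>,
  \<open>x = m t + r\<close> with \<open>t \<le> 2^k\<close> and \<open>r < m \<le> 2^(k+1)\<close>, and write \<open>r\<close> and \<open>t\<close> in binary; this expresses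
  \<open>x\<close> as a sum of the divisors \<open>2^i\<close> and \<open>m 2^j\<close> (\<open>i, j \<le> k\<close>), which are distinct since \<open>m\<close> is odd.
  Now choose \<open>m\<close> odd with \<open>m \<equiv> b (mod a)\<close> and \<open>k\<close> a large multiple of \<open>\<phi>(a)\<close>: Euler's theorem gives
  \<open>2^k m \<equiv> b (mod a)\<close>, and letting \<open>k\<close> grow yields infinitely many practical numbers \<open>a n + b\<close>.\<close>

lemma sum_distinct_powers_of_two:
  fixes r :: nat
  assumes "r < 2^n"
  shows "\<exists>I \<subseteq> {..<n}. (\<Sum>i\<in>I. 2^i) = r"
  using assms
proof (induction n arbitrary: r)
  case 0
  then show ?case by auto
next
  case (Suc n)
  show ?case
  proof (cases "r < 2^n")
    case True
    with Suc.IH obtain I where "I \<subseteq> {..<n}" "(\<Sum>i\<in>I. 2^i) = r" by blast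
    then show ?thesis by (intro exI[of _ I]) auto
  next
    case False
    with Suc.prems have "r - 2^n < 2^n" by simp
    with Suc.IH obtain I where I: "I \<subseteq> {..<n}" "(\<Sum>i\<in>I. 2^i) = r - 2^n" by blast
    have "n \<notin> I" "finite I" using I(1) finite_subset by auto
    then have "(\<Sum>i\<in>insert n I. 2^i) = r" using I(2) False by simp
    then show ?thesis using I(1) by (intro exI[of _ "insert n I"]) auto
  qed
qed

lemma odd_dvd_power_of_two_imp_one:
  fixes m :: nat
  assumes "odd m" "m dvd 2^i"
  shows "m = 1"
proof -
  have "coprime m (2^i)" using assms(1) by simp
  with assms(2) have "is_unit m" by (meson coprime_common_divisor dvd_refl)
  then show ?thesis by simp
qed

lemma practical_pow2_mult_odd:
  fixes k m :: nat
  assumes "odd m" "m \<le> 2^(k+1)"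
  shows "practical (2^k * m)"
  unfolding practical_def
proof (intro conjI ballI)
  have "m > 0" using assms(1) by (simp add: odd_pos)
  then show "2^k * m > 0" by simp
  fix x assume x: "x \<in> {1..2^k * m}"
  define t r where "t = x div m" and "r = x mod m"
  have x_eq: "x = m * t + r" unfolding t_def r_def by simp
  have "r < 2^(k+1)" unfolding r_def using \<open>m > 0\<close> assms(2) by (meson mod_less_divisor order_less_le_trans)
  then obtain I where I: "I \<subseteq> {..<k+1}" "(\<Sum>i\<in>I. 2^i) = r"
    using sum_distinct_powers_of_two by blast
  have "t \<le> 2^k" unfolding t_def using x div_le_mono[of x "2^k * m" m] \<open>m > 0\<close> by simp
  then have "t < 2^(k+1)" by (rule le_less_trans) simp
  then obtain J where J: "J \<subseteq> {..<k+1}" "(\<Sum>j\<in>J. 2^j) = t"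
    using sum_distinct_powers_of_two by blast
  have fin: "finite I" "finite J" using I(1) J(1) finite_subset by auto
  \<comment> \<open>The two families of divisors coincide when \<open>m = 1\<close>, but then \<open>r = 0\<close> and \<open>I\<close> is empty.\<close>
  have disjoint: "(\<lambda>i. 2^i) ` I \<inter> (\<lambda>j. m * 2^j) ` J = {}"
  proof (rule ccontr)
    assume "(\<lambda>i. 2^i) ` I \<inter> (\<lambda>j. m * 2^j) ` J \<noteq> {}"
    then obtain i j where "i \<in> I" "(2::nat)^i = m * 2^j" by auto
    then have "m = 1" using assms(1) odd_dvd_power_of_two_imp_one by (metis dvd_triv_left)
    then have "I = {}" using I(2) fin(1) unfolding r_def by simp
    with \<open>i \<in> I\<close> show False by simp
  qed
  have "inj_on (\<lambda>i. (2::nat)^i) I" "inj_on (\<lambda>j. m * 2^j) J"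
    using \<open>m > 0\<close> by (auto simp: inj_on_def)
  then have "\<Sum>((\<lambda>i. 2^i) ` I \<union> (\<lambda>j. m * 2^j) ` J) = (\<Sum>i\<in>I. 2^i) + (\<Sum>j\<in>J. m * 2^j)"
    using fin disjoint by (simp add: sum.union_disjoint sum.reindex)
  also have "\<dots> = x" using I(2) J(2) x_eq by (simp add: sum_distrib_left[symmetric])
  finally have "\<Sum>((\<lambda>i. 2^i) ` I \<union> (\<lambda>j. m * 2^j) ` J) = x" .
  moreover have "(\<lambda>i. 2^i) ` I \<union> (\<lambda>j. m * 2^j) ` J \<subseteq> {d. d dvd 2^k * m}"
    using I(1) J(1) by (auto simp: le_imp_power_dvd dvd_mult2 mult.commute)
  ultimately show "\<exists>S. S \<subseteq> {d. d dvd 2^k * m} \<and> \<Sum>S = x" by blast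
qed

lemma cong_pow2_totient_mult:
  fixes a m :: nat
  assumes "odd a"
  shows "[2^(totient a * e) * m = m] (mod a)"
proof -
  have "[2^totient a = 1] (mod a)" using assms by (intro euler_theorem) simp
  then have "[(2^totient a)^e * m = 1^e * m] (mod a)" by (intro cong_mult cong_pow) auto
  then show ?thesis by (simp add: power_mult)
qed

theorem corollary2p3:
  fixes a b :: nat
  assumes "odd a" and "a > 0" and "b > 0"
  shows "infinite {N. practical N \<and> (\<exists>n::nat. N = a * n + b)}"
proof -
  define m where "m = (if odd b then b else b + a)"
  have m: "odd m" "b \<le> m" "[m = b] (mod a)" using assms(1) unfolding m_def by (auto simp: cong_def)
  define N where "N j = 2^(totient a * (j + m)) * m" for j
  have "N j \<in> {N. practical N \<and> (\<exists>n::nat. N = a * n + b)}" for j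
  proof -
    have "m < 2^m" by (rule less_exp)
    also have "\<dots> \<le> 2^(totient a * (j + m) + 1)"
    proof (intro power_increasing)
      have "j + m \<le> totient a * (j + m)"
        using assms(2) mult_le_mono1[of 1 "totient a" "j + m"] by (simp add: Suc_le_eq)
      then show "m \<le> totient a * (j + m) + 1" by linarith
    qed simp
    finally have "practical (N j)" unfolding N_def using m(1) by (intro practical_pow2_mult_odd) auto
    moreover have "[N j = b] (mod a)"
      unfolding N_def using cong_pow2_totient_mult[OF assms(1)] m(3) by (rule cong_trans)
    moreover have "b \<le> N j" unfolding N_def using m(2)
      by (metis le_trans mult_le_mono1 mult_1 one_le_numeral one_le_power)
    ultimately show ?thesis by (auto simp: cong_le_nat mult.commute)
  qed
  moreover have "strict_mono N"
    unfolding strict_mono_Suc_iff N_def using m(1) assms(2) by (simp add: odd_pos)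
  then have "infinite (range N)" by (simp add: strict_mono_imp_inj_on range_inj_infinite)
  ultimately show ?thesis by (meson image_subsetI infinite_super)
qed

end
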